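(* Let $(\theta_n)_{n\ge1}$ be a periodic sequence of complex numbers, and let $q$ be a positive multiple of its period. If $\sum_{j=1}^q\theta_j=0$, then $$\sum_{n=1}^{\infty}\theta_n\left(1-n\log\frac{n+1}{n}\right)=\sum_{j=1}^{q}\theta_j\log\frac{K\left(\frac{j+1}{q}\right)^q e^{-j/q}}{K\left(\frac jq\right)^q\,\Gamma\left(\frac{j+1}{q}\right)}.$$
   Context: $\Gamma$ is Euler's gamma function. The Kinkelin–Bendersky hyperfactorial $K$ function is the real-valued function on $[0,\infty)$ defined by $\log K(x)=\frac{x^2-x}{2}-\frac x2\log 2\pi+\int_0^x\log\Gamma(y)\,dy$. *)

theory Defs
  imports "HOL-Analysis.Analysis"
begin

text \<open>Kinkelin--Bendersky hyperfactorial K on [0,\<infinity>):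
  log K(x) = (x^2 - x)/2 - (x/2) log(2 pi) + integral from 0 to x of log Gamma(y) dy.
  (The integrand is improper but absolutely integrable at 0; the value at the single
  point y = 0 is irrelevant.)\<close>
definition K_hyp :: "real \<Rightarrow> real" where
  "K_hyp x = exp ((x^2 - x) / 2 - x / 2 * ln (2 * pi) + integral {0..x} (\<lambda>y. ln (Gamma y)))"

end

theory Submission
  imports Defs "HOL-Real_Asymp.Real_Asymp"
begin

text \<open>Put \<open>h = 1 / q\<close> and \<open>F x = (ln K (x + h) - ln K x) / h - x - ln (Gamma (x + h))\<close>.
  Through \<open>Gamma (t + 1) = t * Gamma t\<close> one gets \<open>F (x + 1) - F x = x / h * ln ((x + h) / x) - 1\<close>,
  so for \<open>n = N * q + j\<close> the \<open>n\<close>-th term of the series is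
  \<open>\<theta> j * (F (N + j / q) - F (N + 1 + j / q))\<close> and the partial sum over \<open>N\<close> full periods
  telescopes to \<open>\<Sum>j. \<theta> j * (F (j / q) - F (N + j / q))\<close>. As \<open>\<Sum>j. \<theta> j = 0\<close>, the error
  equals \<open>\<Sum>j. \<theta> j * (F (N + j / q) - F N)\<close>, which tends to 0 because log-convexity of
  \<open>Gamma\<close> gives \<open>\<bar>F (x + y) - F x\<bar> \<le> ln ((x + 2) / (x - 1))\<close> for \<open>0 \<le> y \<le> 1\<close>.
  The terms tend to 0, so convergence along multiples of \<open>q\<close> suffices.\<close>

lemma isCont_ln_Gamma_real:
  assumes "x > 0"
  shows "isCont (\<lambda>x::real. ln (Gamma x)) x"
proof -
  have "Gamma x \<noteq> 0"
    using Gamma_real_pos[OF assms] by linarith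
  then show ?thesis
    by (intro continuous_intros) (use assms in \<open>auto simp: nonpos_Ints_def\<close>)
qed

lemma continuous_on_ln_Gamma_real: "a > 0 \<Longrightarrow> continuous_on {a..b} (\<lambda>x::real. ln (Gamma x))"
  by (intro continuous_at_imp_continuous_on ballI isCont_ln_Gamma_real) auto

lemma continuous_on_ln_Gamma_shift_real:
  "a + y > 0 \<Longrightarrow> continuous_on {a..b} (\<lambda>t::real. ln (Gamma (t + y)))"
  by (intro continuous_at_imp_continuous_on ballI continuous_at_compose[unfolded o_def,
        of _ "\<lambda>t. t + y" "\<lambda>x. ln (Gamma x)"] continuous_intros isCont_ln_Gamma_real) auto

lemma ln_Gamma_plus1_real: "t > 0 \<Longrightarrow> ln (Gamma (t + 1)) = ln t + ln (Gamma (t::real))"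
  by (simp add: Gamma_plus1 nonpos_Ints_def ln_mult_pos)

lemma has_integral_ln_0:
  assumes "b \<ge> 0"
  shows "(ln has_integral (b * ln b - b)) {0..b::real}"
proof (cases "b = 0")
  case True
  then show ?thesis using has_integral_refl(2)[of ln "0::real"] by simp
next
  case False
  with assms have b: "b > 0" by simp
  have "continuous_on {0..b} (\<lambda>y::real. y * ln y - y)"
  proof (rule continuous_on_IccI)
    show "((\<lambda>y::real. y * ln y - y) \<longlongrightarrow> 0 * ln 0 - 0) (at_right 0)"
      by simp real_asymp
  qed (use b in \<open>auto intro!: tendsto_intros\<close>)
  then have "(ln has_integral ((b * ln b - b) - (0 * ln 0 - 0))) {0..b}"
    by (rule fundamental_theorem_of_calculus_interior[OF assms])
       (auto simp flip: has_real_derivative_iff_has_vector_derivative intro!: derivative_eq_intros)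
  then show ?thesis by simp
qed

lemma integral_ln:
  assumes "0 \<le> a" "a \<le> b"
  shows "integral {a..b} ln = (b * ln b - b) - (a * ln a - (a::real))"
proof -
  have "integral {0..a} ln + integral {a..b} ln = integral {0..b} (ln :: real \<Rightarrow> real)"
    using Henstock_Kurzweil_Integration.integral_combine[where f = ln and a = 0 and c = a and b = b]
      assms has_integral_ln_0[of b]
    by auto
  moreover have "integral {0..a} ln = a * ln a - a" "integral {0..b} ln = b * ln b - b"
    using assms has_integral_ln_0[of a] has_integral_ln_0[of b] by (auto intro: integral_unique)
  ultimately show ?thesis by simp
qed

text \<open>The singularity of \<open>ln \<circ> Gamma\<close> at 0 is that of \<open>-ln\<close>, since
  \<open>Gamma (x + 1) = x * Gamma x\<close>.\<close>
lemma integrable_ln_Gamma_real: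
  assumes "b \<ge> 0"
  shows "(\<lambda>x::real. ln (Gamma x)) integrable_on {0..b}"
proof -
  have "continuous_on {0..b} (\<lambda>x::real. ln (Gamma (x + 1)))"
    by (rule continuous_on_ln_Gamma_shift_real) simp
  moreover have "ln integrable_on {0..b}"
    using has_integral_ln_0[OF assms] by blast
  ultimately have "(\<lambda>x::real. ln (Gamma (x + 1)) - ln x) integrable_on {0..b}"
    by (rule integrable_diff[OF integrable_continuous_interval])
  then show ?thesis
    by (rule integrable_spike_finite[where S = "{0}", rotated 2]) (auto simp: ln_Gamma_plus1_real)
qed

lemma integral_ln_Gamma_combine:
  assumes "0 \<le> a" "a \<le> b"
  shows "integral {0..b} (\<lambda>y::real. ln (Gamma y))
           = integral {0..a} (\<lambda>y. ln (Gamma y)) + integral {a..b} (\<lambda>y. ln (Gamma y))"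
  using Henstock_Kurzweil_Integration.integral_combine[where f = "\<lambda>y. ln (Gamma y)" and a = 0
      and c = a and b = b] assms integrable_ln_Gamma_real[of b]
  by simp

lemma ln_K_hyp:
  "ln (K_hyp x) = (x^2 - x) / 2 - x / 2 * ln (2 * pi) + integral {0..x} (\<lambda>y. ln (Gamma y))"
  by (simp add: K_hyp_def)

lemma ln_K_hyp_second_difference:
  assumes "x > 0" "y \<ge> 0" "h \<ge> 0"
  shows "ln (K_hyp (x + y + h)) - ln (K_hyp (x + y)) - ln (K_hyp (x + h)) + ln (K_hyp x)
           = y * h + integral {x..x + h} (\<lambda>t. ln (Gamma (t + y)) - ln (Gamma t))"
proof -
  let ?L = "\<lambda>t::real. ln (Gamma t)"
  have "integral {x + y..x + y + h} ?L = integral {x..x + h} (\<lambda>t. ?L (t + y))"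
    using integral_shift_real_ivl[of "x + y" y "x + y + h" ?L] by simp
  also have "\<dots> = integral {x..x + h} (\<lambda>t. ?L (t + y) - ?L t) + integral {x..x + h} ?L"
    using assms continuous_on_ln_Gamma_shift_real[of x y "x + h"]
      continuous_on_ln_Gamma_real[of x "x + h"]
    by (simp add: Henstock_Kurzweil_Integration.integral_diff integrable_continuous_interval)
  finally have "integral {x + y..x + y + h} ?L
      = integral {x..x + h} (\<lambda>t. ?L (t + y) - ?L t) + integral {x..x + h} ?L" .
  moreover have "integral {0..x + y + h} ?L = integral {0..x + y} ?L + integral {x + y..x + y + h} ?L"
    "integral {0..x + h} ?L = integral {0..x} ?L + integral {x..x + h} ?L"
    using assms by (intro integral_ln_Gamma_combine; simp)+
  moreover have "ln (K_hyp (x + y + h)) - ln (K_hyp (x + y)) - ln (K_hyp (x + h)) + ln (K_hyp x)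
      = y * h + (integral {0..x + y + h} ?L - integral {0..x + y} ?L)
          - (integral {0..x + h} ?L - integral {0..x} ?L)"
    unfolding ln_K_hyp power2_eq_square by (simp add: field_simps)
  ultimately show ?thesis
    by linarith
qed

text \<open>For \<open>h = 1 / q\<close> and \<open>x = j / q\<close> this is the \<open>j\<close>-th logarithm on the right-hand side,
  and in steps of 1 it is an antidifference of \<open>x \<mapsto> x / h * ln ((x + h) / x) - 1\<close>.\<close>
definition K_antidiff :: "real \<Rightarrow> real \<Rightarrow> real" where
  "K_antidiff h x = (ln (K_hyp (x + h)) - ln (K_hyp x)) / h - x - ln (Gamma (x + h))"

lemma K_antidiff_shift:
  assumes "x > 0" "y \<ge> 0" "h > 0"
  shows "K_antidiff h (x + y) - K_antidiff h x
           = integral {x..x + h} (\<lambda>t. ln (Gamma (t + y)) - ln (Gamma t)) / h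
             - (ln (Gamma (x + h + y)) - ln (Gamma (x + h)))"
proof -
  have "K_antidiff h (x + y) - K_antidiff h x
      = (ln (K_hyp (x + y + h)) - ln (K_hyp (x + y)) - ln (K_hyp (x + h)) + ln (K_hyp x)) / h - y
        - (ln (Gamma (x + h + y)) - ln (Gamma (x + h)))"
    unfolding K_antidiff_def by (simp add: diff_divide_distrib add_divide_distrib algebra_simps)
  then show ?thesis
    using assms by (simp add: ln_K_hyp_second_difference add_divide_distrib)
qed

lemma K_antidiff_step:
  assumes "x > 0" "h > 0"
  shows "K_antidiff h (x + 1) - K_antidiff h x = x / h * ln ((x + h) / x) - 1"
proof -
  have "integral {x..x + h} (\<lambda>t. ln (Gamma (t + 1)) - ln (Gamma t)) = integral {x..x + h} ln"
    by (rule integral_cong) (use assms in \<open>auto simp: ln_Gamma_plus1_real\<close>)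
  also have "\<dots> = ((x + h) * ln (x + h) - (x + h)) - (x * ln x - x)"
    by (rule integral_ln) (use assms in auto)
  finally have "K_antidiff h (x + 1) - K_antidiff h x
      = (((x + h) * ln (x + h) - (x + h)) - (x * ln x - x)) / h - ln (x + h)"
    using K_antidiff_shift[of x 1 h] ln_Gamma_plus1_real[of "x + h"] assms by simp
  also have "\<dots> = x / h * (ln (x + h) - ln x) - 1"
    using assms by (simp add: field_simps)
  finally show ?thesis
    using assms by (simp add: ln_div)
qed

lemma convex_on_slope_mono:
  fixes f :: "real \<Rightarrow> real"
  assumes "convex_on I f" "a \<in> I" "c \<in> I" "a < b" "b < c"
  shows "(f b - f a) / (b - a) \<le> (f c - f b) / (c - b)"
proof -
  have "(f a - f b) / (a - b) \<le> (f b - f c) / (b - c)"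
    using convex_on_slope_le[OF assms] by linarith
  then show ?thesis
    by (metis minus_diff_eq minus_divide_divide)
qed

text \<open>Log-convexity of \<open>Gamma\<close> squeezes the slope over \<open>[t, t + y]\<close> between
  the slopes \<open>ln (t - 1)\<close> over \<open>[t - 1, t]\<close> and \<open>ln (t + y)\<close> over \<open>[t + y, t + y + 1]\<close>.\<close>
lemma ln_Gamma_increment_bounds:
  fixes t y :: real
  assumes "t > 1" "y \<ge> 0"
  shows "y * ln (t - 1) \<le> ln (Gamma (t + y)) - ln (Gamma t)"
    and "ln (Gamma (t + y)) - ln (Gamma t) \<le> y * ln (t + y)"
proof -
  let ?f = "\<lambda>x::real. ln (Gamma x)"
  have convex: "convex_on {0<..} ?f"
    using log_convex_Gamma_real by (simp add: o_def)
  have "y * ln (t - 1) \<le> ?f (t + y) - ?f t \<and> ?f (t + y) - ?f t \<le> y * ln (t + y)"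
  proof (cases "y = 0")
    case False
    then have y: "y > 0"
      using assms by simp
    have "ln (t - 1) \<le> (?f (t + y) - ?f t) / y"
      using convex_on_slope_mono[OF convex, of "t - 1" "t + y" t] ln_Gamma_plus1_real[of "t - 1"]
        assms y by simp
    moreover have "(?f (t + y) - ?f t) / y \<le> ln (t + y)"
      using convex_on_slope_mono[OF convex, of t "t + y + 1" "t + y"] ln_Gamma_plus1_real[of "t + y"]
        assms y by simp
    ultimately show ?thesis
      using y by (simp add: pos_le_divide_eq pos_divide_le_eq mult.commute)
  qed simp
  then show "y * ln (t - 1) \<le> ?f (t + y) - ?f t" "?f (t + y) - ?f t \<le> y * ln (t + y)"
    by auto
qed

lemma K_antidiff_shift_bound:
  assumes h: "0 < h" "h \<le> 1" and x: "x > 1" and y: "0 \<le> y" "y \<le> 1"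
  shows "\<bar>K_antidiff h (x + y) - K_antidiff h x\<bar> \<le> ln (x + 2) - ln (x - 1)"
proof -
  define D where "D t = ln (Gamma (t + y)) - ln (Gamma t)" for t
  define lo hi where "lo = y * ln (x - 1)" and "hi = y * ln (x + 2)"
  have D_bounds: "lo \<le> D t \<and> D t \<le> hi" if "t \<in> {x..x + h}" for t
  proof -
    have "lo \<le> y * ln (t - 1)"
      unfolding lo_def using that x y by (intro mult_left_mono) auto
    moreover have "y * ln (t + y) \<le> hi"
      unfolding hi_def using that x y h by (intro mult_left_mono) auto
    ultimately show ?thesis
      unfolding D_def using ln_Gamma_increment_bounds[of t y] that x y by fastforce
  qed
  have "D integrable_on {x..x + h}"
    unfolding D_def using x y
    by (intro integrable_diff integrable_continuous_interval continuous_on_ln_Gamma_real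
          continuous_on_ln_Gamma_shift_real) auto
  then have "h * lo \<le> integral {x..x + h} D" "integral {x..x + h} D \<le> h * hi"
    using integral_le[of "\<lambda>_. lo" "{x..x + h}" D] integral_le[of D "{x..x + h}" "\<lambda>_. hi"]
      D_bounds h by auto
  then have "lo \<le> integral {x..x + h} D / h" "integral {x..x + h} D / h \<le> hi"
    using h by (simp_all add: pos_le_divide_eq pos_divide_le_eq mult.commute)
  moreover have "lo \<le> D (x + h)" "D (x + h) \<le> hi"
    using D_bounds[of "x + h"] h by auto
  moreover have "K_antidiff h (x + y) - K_antidiff h x = integral {x..x + h} D / h - D (x + h)"
    unfolding D_def using K_antidiff_shift[of x y h] x y h by (simp add: add_ac)
  ultimately have "\<bar>K_antidiff h (x + y) - K_antidiff h x\<bar> \<le> y * (ln (x + 2) - ln (x - 1))"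
    unfolding lo_def hi_def by (simp add: abs_le_iff right_diff_distrib)
  also have "\<dots> \<le> ln (x + 2) - ln (x - 1)"
    using x y by (intro mult_left_le_one_le) auto
  finally show ?thesis .
qed

lemma K_antidiff_shift_tendsto:
  assumes "0 < h" "h \<le> 1" "0 \<le> y" "y \<le> 1"
  shows "((\<lambda>x. K_antidiff h (x + y) - K_antidiff h x) \<longlongrightarrow> 0) at_top"
proof (rule Lim_null_comparison)
  show "\<forall>\<^sub>F x in at_top. norm (K_antidiff h (x + y) - K_antidiff h x) \<le> ln (x + 2) - ln (x - 1)"
    using eventually_gt_at_top[of 1] by eventually_elim (use assms K_antidiff_shift_bound in auto)
  show "((\<lambda>x::real. ln (x + 2) - ln (x - 1)) \<longlongrightarrow> 0) at_top"
    by real_asymp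
qed

lemma sums_ungroup:
  fixes f :: "nat \<Rightarrow> 'a::real_normed_vector"
  assumes k: "k > 0" and f: "f \<longlonglongrightarrow> 0" and grouped: "(\<lambda>n. \<Sum>i<n * k. f i) \<longlonglongrightarrow> s"
  shows "f sums s"
proof -
  have div_k: "filterlim (\<lambda>m. m div k) sequentially sequentially"
    unfolding filterlim_at_top eventually_sequentially
    using k by (metis div_le_mono div_mult_self1_is_m mult.commute)
  have head: "(\<lambda>m. \<Sum>i<m div k * k. f i) \<longlonglongrightarrow> s"
    using filterlim_compose[OF grouped div_k] by simp
  have tail: "(\<lambda>m. \<Sum>i\<in>{m div k * k..<m}. f i) \<longlonglongrightarrow> 0"
  proof (rule Lim_null_comparison)
    show "\<forall>\<^sub>F m in sequentially.
        norm (\<Sum>i\<in>{m div k * k..<m}. f i) \<le> (\<Sum>r<k. norm (f (m div k * k + r)))"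
    proof (intro always_eventually allI)
      fix m
      have "m < m div k * k + k"
        using k by (metis add.commute div_mult_mod_eq add_less_cancel_left mod_less_divisor)
      then have "norm (\<Sum>i\<in>{m div k * k..<m}. f i)
          \<le> (\<Sum>i\<in>{m div k * k..<m div k * k + k}. norm (f i))"
        by (intro order.trans[OF norm_sum] sum_mono2) auto
      also have "\<dots> = (\<Sum>r<k. norm (f (m div k * k + r)))"
        by (simp add: sum.shift_bounds_nat_ivl[of _ 0 "m div k * k" k, simplified] add.commute
            lessThan_atLeast0)
      finally show "norm (\<Sum>i\<in>{m div k * k..<m}. f i) \<le> (\<Sum>r<k. norm (f (m div k * k + r)))" .
    qed
    have "(\<lambda>n. f (n * k + r)) \<longlonglongrightarrow> 0" for r
      using LIMSEQ_subseq_LIMSEQ[OF f, of "\<lambda>n. n * k + r"] k by (simp add: strict_mono_def o_def)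
    then show "(\<lambda>m. \<Sum>r<k. norm (f (m div k * k + r))) \<longlonglongrightarrow> 0"
      by (intro tendsto_null_sum tendsto_norm_zero filterlim_compose[OF _ div_k])
  qed
  have "(\<Sum>i<m div k * k. f i) + (\<Sum>i\<in>{m div k * k..<m}. f i) = (\<Sum>i<m. f i)" for m
    using sum.atLeastLessThan_concat[of 0 "m div k * k" m f] by (simp add: lessThan_atLeast0)
  then show ?thesis
    using tendsto_add[OF head tail] by (simp add: sums_def)
qed

lemma periodic_add_mult:
  fixes \<theta> :: "nat \<Rightarrow> 'a" and p q :: nat
  assumes periodic: "\<forall>n\<ge>1. \<theta> (n + p) = \<theta> n" and "p dvd q" and "j \<ge> 1"
  shows "\<theta> (N * q + j) = \<theta> j"
proof -
  obtain k where k: "q = p * k"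
    using \<open>p dvd q\<close> by blast
  have "\<theta> (j + c * p) = \<theta> j" for c
  proof (induction c)
    case (Suc c)
    have "\<theta> (j + Suc c * p) = \<theta> ((j + c * p) + p)"
      by (simp add: algebra_simps)
    also have "\<dots> = \<theta> (j + c * p)"
      using periodic \<open>j \<ge> 1\<close> by simp
    finally show ?case
      using Suc.IH by simp
  qed simp
  from this[of "N * k"] show ?thesis
    by (simp add: k algebra_simps)
qed

lemma periodic_telescoping_partial_sums:
  fixes \<theta> :: "nat \<Rightarrow> 'a::real_algebra_1" and F :: "real \<Rightarrow> real"
  assumes q: "q > 0"
    and periodic: "\<And>N j. j \<in> {1..q} \<Longrightarrow> \<theta> (N * q + j) = \<theta> j"
    and a_eq: "\<And>n. n \<ge> 1 \<Longrightarrow> a n = F (real n / real q) - F (real n / real q + 1)"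
  shows "(\<Sum>m<N * q. \<theta> (Suc m) * of_real (a (Suc m)))
           = (\<Sum>j=1..q. \<theta> j * of_real (F (real j / real q) - F (real N + real j / real q)))"
proof -
  define g where "g j M = \<theta> j * of_real (F (real M + real j / real q))" for j M
  have block: "(\<Sum>m\<in>{M * q..<M * q + q}. \<theta> (Suc m) * of_real (a (Suc m)))
      = (\<Sum>j=1..q. g j M - g j (Suc M))" for M
  proof -
    have "(\<Sum>m\<in>{M * q..<M * q + q}. \<theta> (Suc m) * of_real (a (Suc m)))
        = (\<Sum>j=1..q. \<theta> (M * q + j) * of_real (a (M * q + j)))"
      by (rule sum.reindex_bij_witness[where i = "\<lambda>j. M * q + j - 1" and j = "\<lambda>m. Suc m - M * q"])
        auto
    also have "\<dots> = (\<Sum>j=1..q. g j M - g j (Suc M))"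
    proof (rule sum.cong)
      fix j assume j: "j \<in> {1..q}"
      have "real (M * q + j) / real q = real M + real j / real q"
        using q by (simp add: field_simps)
      then have "a (M * q + j) = F (real M + real j / real q) - F (real (Suc M) + real j / real q)"
        using a_eq[of "M * q + j"] j by (simp add: add_ac)
      then show "\<theta> (M * q + j) * of_real (a (M * q + j)) = g j M - g j (Suc M)"
        using periodic[OF j] by (simp add: g_def right_diff_distrib)
    qed simp
    finally show ?thesis .
  qed
  have "(\<Sum>m<N * q. \<theta> (Suc m) * of_real (a (Suc m)))
      = (\<Sum>M<N. \<Sum>j=1..q. g j M - g j (Suc M))"
    by (simp add: sum.nat_group[symmetric] block)
  also have "\<dots> = (\<Sum>j=1..q. g j 0 - g j N)"
    by (subst sum.swap) (rule sum.cong[OF refl sum_lessThan_telescope'])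
  finally show ?thesis
    by (simp add: g_def algebra_simps)
qed

lemma periodic_telescoping_sums:
  fixes \<theta> :: "nat \<Rightarrow> 'a::real_normed_field" and F :: "real \<Rightarrow> real"
  assumes q: "q > 0"
    and periodic: "\<And>N j. j \<in> {1..q} \<Longrightarrow> \<theta> (N * q + j) = \<theta> j"
    and balanced: "(\<Sum>j=1..q. \<theta> j) = 0"
    and a_eq: "\<And>n. n \<ge> 1 \<Longrightarrow> a n = F (real n / real q) - F (real n / real q + 1)"
    and a_lim: "a \<longlonglongrightarrow> 0"
    and F_lim: "\<And>j. j \<in> {1..q} \<Longrightarrow> (\<lambda>N. F (real N + real j / real q) - F (real N)) \<longlonglongrightarrow> 0"
  shows "(\<lambda>m. \<theta> (Suc m) * of_real (a (Suc m))) sums (\<Sum>j=1..q. \<theta> j * of_real (F (real j / real q)))"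
proof (rule sums_ungroup[OF q])
  have "norm (\<theta> (Suc m)) \<le> (\<Sum>j=1..q. norm (\<theta> j))" for m
  proof -
    have j: "Suc (m mod q) \<in> {1..q}"
      using q by (simp add: Suc_leI)
    then have "\<theta> (Suc m) = \<theta> (Suc (m mod q))"
      using periodic[OF j, of "m div q"] by simp
    then show ?thesis
      using member_le_sum[OF j, of "\<lambda>j. norm (\<theta> j)"] by simp
  qed
  then have bound:
      "norm (\<theta> (Suc m) * of_real (a (Suc m))) \<le> (\<Sum>j=1..q. norm (\<theta> j)) * \<bar>a (Suc m)\<bar>" for m
    by (simp add: norm_mult mult_right_mono)
  show "(\<lambda>m. \<theta> (Suc m) * of_real (a (Suc m))) \<longlonglongrightarrow> 0"
    by (rule Lim_null_comparison[OF always_eventually[OF allI[OF bound]]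
          tendsto_mult_right_zero[OF tendsto_rabs_zero[OF LIMSEQ_Suc[OF a_lim]]]])
  have "(\<Sum>j=1..q. \<theta> j * of_real (F (real N + real j / real q) - F (real N)))
      = (\<Sum>j=1..q. \<theta> j * of_real (F (real N + real j / real q)))
        - (\<Sum>j=1..q. \<theta> j) * of_real (F (real N))" for N by (simp add: right_diff_distrib sum_subtractf sum_distrib_right)
  moreover have "(\<lambda>N. of_real (F (real N + real j / real q) - F (real N)) :: 'a) \<longlonglongrightarrow> 0"
    if "j \<in> {1..q}" for j
    using tendsto_of_real[OF F_lim[OF that]] by simp
  then have "(\<lambda>N. \<Sum>j=1..q. \<theta> j * of_real (F (real N + real j / real q) - F (real N))) \<longlonglongrightarrow> 0"
    by (intro tendsto_null_sum tendsto_mult_right_zero)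
  ultimately have "(\<lambda>N. \<Sum>j=1..q. \<theta> j * of_real (F (real N + real j / real q))) \<longlonglongrightarrow> 0"
    using balanced by simp
  then have "(\<lambda>N. (\<Sum>j=1..q. \<theta> j * of_real (F (real j / real q)))
        - (\<Sum>j=1..q. \<theta> j * of_real (F (real N + real j / real q))))
      \<longlonglongrightarrow> (\<Sum>j=1..q. \<theta> j * of_real (F (real j / real q))) - 0"
    by (intro tendsto_diff tendsto_const)
  then show "(\<lambda>N. \<Sum>m<N * q. \<theta> (Suc m) * of_real (a (Suc m)))
      \<longlonglongrightarrow> (\<Sum>j=1..q. \<theta> j * of_real (F (real j / real q)))"
    using periodic_telescoping_partial_sums[where \<theta> = \<theta> and F = F and a = a, OF q periodic a_eq]
    by (simp add: right_diff_distrib sum_subtractf)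
qed

lemma K_antidiff_step_nat:
  assumes "q > 0" "n \<ge> 1"
  shows "1 - real n * ln (real (n + 1) / real n)
           = K_antidiff (1 / real q) (real n / real q) - K_antidiff (1 / real q) (real n / real q + 1)"
proof -
  have "(real n / real q + 1 / real q) / (real n / real q) = real (n + 1) / real n"
    using assms by (simp add: field_simps)
  then show ?thesis
    using K_antidiff_step[of "real n / real q" "1 / real q"] assms by simp
qed

lemma ln_K_hyp_quotient_eq_K_antidiff:
  assumes "q > 0"
  shows "ln ((K_hyp (real (j + 1) / real q) ^ q * exp (- real j / real q)) /
             (K_hyp (real j / real q) ^ q * Gamma (real (j + 1) / real q)))
           = K_antidiff (1 / real q) (real j / real q)"
proof -
  have "real (j + 1) / real q = real j / real q + 1 / real q"
    by (simp add: add_divide_distrib)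
  moreover have "Gamma (real j / real q + 1 / real q) > 0"
    using assms by (intro Gamma_real_pos) (simp add: add_nonneg_pos)
  moreover have "K_hyp y > 0" "K_hyp y \<noteq> 0" for y
    by (simp_all add: K_hyp_def)
  ultimately show ?thesis
    using assms by (simp add: K_antidiff_def ln_div ln_mult ln_realpow algebra_simps)
qed

theorem theorem37:
  fixes \<theta> :: "nat \<Rightarrow> complex" and p q :: nat
  assumes "p > 0"
    and "\<forall>n\<ge>1. \<theta> (n + p) = \<theta> n"
    and "q > 0" and "p dvd q"
    and "(\<Sum>j=1..q. \<theta> j) = 0"
  shows "(\<lambda>m. \<theta> (Suc m) * complex_of_real (1 - real (Suc m) * ln (real (Suc m + 1) / real (Suc m))))
           sums (\<Sum>j=1..q. \<theta> j * complex_of_real (ln (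
              (K_hyp (real (j + 1) / real q) ^ q * exp (- real j / real q)) /
              (K_hyp (real j / real q) ^ q * Gamma (real (j + 1) / real q)))))"
proof -
  let ?F = "K_antidiff (1 / real q)"
  have "(\<lambda>m. \<theta> (Suc m) * complex_of_real (1 - real (Suc m) * ln (real (Suc m + 1) / real (Suc m))))
      sums (\<Sum>j=1..q. \<theta> j * complex_of_real (?F (real j / real q)))"
  proof (rule periodic_telescoping_sums[where a = "\<lambda>n. 1 - real n * ln (real (n + 1) / real n)"])
    show "\<theta> (N * q + j) = \<theta> j" if "j \<in> {1..q}" for N j
      using periodic_add_mult[OF assms(2,4)] that by simp
    show "1 - real n * ln (real (n + 1) / real n) = ?F (real n / real q) - ?F (real n / real q + 1)"
      if "n \<ge> 1" for n
      using K_antidiff_step_nat[OF \<open>q > 0\<close> that] .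
    show "(\<lambda>n. 1 - real n * ln (real (n + 1) / real n)) \<longlonglongrightarrow> 0"
      by real_asymp
    show "(\<lambda>N. ?F (real N + real j / real q) - ?F (real N)) \<longlonglongrightarrow> 0" if "j \<in> {1..q}" for j
      using filterlim_compose[OF K_antidiff_shift_tendsto filterlim_real_sequentially] that \<open>q > 0\<close>
      by simp
  qed (use assms in simp_all)
  then show ?thesis
    using ln_K_hyp_quotient_eq_K_antidiff[OF \<open>q > 0\<close>] by simp
qed

end
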